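(* Let $B_n$ be the closed Euclidean unit ball in $\mathbf{R}^n$ and $S^{n-1} = \partial B_n$. Let $\mathcal{E}$ be an ellipsoid such that $\mathcal{E} \subset B_n$. Then $\mathcal{E} \cap S^{n-1}$ is a subsphere.
   Context: An ellipsoid is a subset of $\mathbf{R}^n$ of the form $\Theta(B_n)$ where $\Theta : \mathbf{R}^n \to \mathbf{R}^n$ is an affine map (possibly non-injective). A subset $A \subset S^{n-1}$ is a subsphere if $A = S^{n-1} \cap \mathrm{aff}(A)$, where $\mathrm{aff}(A)$ is the affine subspace generated by $A$ (so the empty set is a subsphere). *)

theory Defs
  imports "HOL-Analysis.Analysis"
begin

text \<open>An ellipsoid in R^n: the image of the closed unit ball under an affine map
  x \<mapsto> L x + c, with L linear (possibly non-injective).\<close>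
definition ellipsoid :: "(real ^ 'n) set \<Rightarrow> bool" where
  "ellipsoid E \<longleftrightarrow> (\<exists>(L :: real ^ 'n \<Rightarrow> real ^ 'n) c. linear L \<and> E = (\<lambda>x. L x + c) ` cball 0 1)"

definition subsphere :: "(real ^ 'n) set \<Rightarrow> bool" where
  "subsphere A \<longleftrightarrow> A \<subseteq> sphere 0 1 \<and> A = sphere 0 1 \<inter> affine hull A"

end

theory Submission
  imports Defs
begin

text \<open>
  Write E = L(B) + c and let a0 = L w0 + c be a point of E on the sphere. The tangent hyperplane
  of the sphere at a0 supports E, so w0 maximizes the functional adjoint L a0 on the ball; hence
  adjoint L a0 = t w0 with t \<ge> 0, and if t > 0 then w0 is a unit vector (if t = 0, E = {a0}). Expanding the square gives
  1 - |L w + c|^2 = t (1 - |w|^2) + Q (w - w0) with Q d = t |d|^2 - |L d|^2. The left side is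
  nonnegative on the ball, so Q is nonnegative: on the open half-space w0 . d < 0 by moving
  w0 + s d onto the sphere, and then everywhere by continuity and evenness. Hence L w + c lies on
  the sphere exactly when |w| = 1 and w - w0 lies in the null space N of the positive semidefinite
  form Q, a linear subspace. So E meets the sphere inside the affine set L (w0 + N) + c, and
  conversely a point of that set on the sphere is the image of a unit vector, hence lies in E.
\<close>

lemma power2_norm_add:
  fixes x y :: "'a::real_inner"
  shows "(norm (x + y))\<^sup>2 = (norm x)\<^sup>2 + 2 * (x \<bullet> y) + (norm y)\<^sup>2"
  using dot_norm[of x y] by (simp add: field_simps)

lemma eq_if_inner_ge_one:
  fixes u x :: "'a::real_inner"
  assumes "norm u = 1" and "norm x \<le> 1" and "1 \<le> u \<bullet> x"
  shows "x = u"
proof -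
  have "norm x ^ 2 \<le> 1" using assms(2) by (simp add: power_le_one)
  moreover have "norm (x - u) ^ 2 = norm x ^ 2 - 2 * (u \<bullet> x) + norm u ^ 2"
    by (simp add: power2_norm_eq_inner inner_diff inner_commute)
  ultimately have "norm (x - u) ^ 2 \<le> 0" using assms by simp
  then show ?thesis by simp
qed

lemma cball_inner_maximizer_eq:
  fixes v w0 :: "'a::real_inner"
  assumes "v \<noteq> 0" and "norm w0 \<le> 1" and max: "\<And>w. norm w \<le> 1 \<Longrightarrow> v \<bullet> w \<le> v \<bullet> w0"
  shows "w0 = v /\<^sub>R norm v"
proof (rule eq_if_inner_ge_one)
  have "norm v = v \<bullet> (v /\<^sub>R norm v)"
    using assms(1) by (simp add: dot_square_norm power2_eq_square)
  also have "\<dots> \<le> v \<bullet> w0" using assms(1) by (intro max) simp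
  finally show "1 \<le> (v /\<^sub>R norm v) \<bullet> w0" using assms(1) by (simp add: field_simps)
qed (use assms in auto)

lemma linear_coeff_eq_0_if_nonneg_quadratic:
  fixes b g :: real
  assumes nonneg: "\<And>s. 0 \<le> 2 * s * b + s\<^sup>2 * g"
  shows "b = 0"
proof (rule ccontr)
  assume "b \<noteq> 0"
  define G where "G = \<bar>g\<bar> + 1"
  have "G > 0" and "g < 2 * G" unfolding G_def by auto
  have "2 * (- b / G) * b + (- b / G)\<^sup>2 * g = b\<^sup>2 * (g - 2 * G) / G\<^sup>2"
    using \<open>G > 0\<close> by (simp add: field_simps power2_eq_square)
  also have "\<dots> < 0"
    using \<open>b \<noteq> 0\<close> \<open>G > 0\<close> \<open>g < 2 * G\<close> by (simp add: divide_neg_pos mult_pos_neg)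
  finally show False using nonneg[of "- b / G"] by simp
qed

lemma nonneg_if_nonneg_on_open_halfspace:
  fixes q :: "'a::euclidean_space \<Rightarrow> real"
  assumes "continuous_on UNIV q" and even: "\<And>d. q (- d) = q d" and "u \<noteq> 0"
    and halfspace: "\<And>d. u \<bullet> d < 0 \<Longrightarrow> 0 \<le> q d"
  shows "0 \<le> q d"
proof -
  have "closure {d. u \<bullet> d < 0} \<subseteq> {d. 0 \<le> q d}"
    using halfspace assms(1) by (intro closure_minimal closed_Collect_le) auto
  then have closed_halfspace: "u \<bullet> d \<le> 0 \<Longrightarrow> 0 \<le> q d" for d
    using \<open>u \<noteq> 0\<close> by auto
  show ?thesis
    using closed_halfspace[of d] closed_halfspace[of "- d"] even by fastforce
qed

lemma inner_touching_point:
  fixes L :: "'a::euclidean_space \<Rightarrow> 'b::euclidean_space"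
  assumes "linear L" and "norm (L w0 + c) = 1"
  shows "(L w0 + c) \<bullet> (L w + c) = 1 + adjoint L (L w0 + c) \<bullet> (w - w0)"
proof -
  have "(L w0 + c) \<bullet> (L w + c) = (L w0 + c) \<bullet> (L w0 + c) + (L w0 + c) \<bullet> L (w - w0)"
    using assms(1) by (simp add: linear_diff inner_diff_right inner_add_right)
  then show ?thesis
    using assms by (simp add: adjoint_works inner_commute flip: power2_norm_eq_inner)
qed

lemma adjoint_support_at_touching_point:
  fixes L :: "'a::euclidean_space \<Rightarrow> 'b::euclidean_space"
  assumes "linear L" and in_ball: "\<And>w. norm w \<le> 1 \<Longrightarrow> norm (L w + c) \<le> 1"
    and touch: "norm (L w0 + c) = 1" and "norm w \<le> 1"
  shows "adjoint L (L w0 + c) \<bullet> w \<le> adjoint L (L w0 + c) \<bullet> w0"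
proof -
  have "(L w0 + c) \<bullet> (L w + c) \<le> norm (L w0 + c) * norm (L w + c)"
    by (rule norm_cauchy_schwarz)
  also have "\<dots> \<le> 1" using touch in_ball[OF \<open>norm w \<le> 1\<close>] by simp
  finally show ?thesis
    using inner_touching_point[OF \<open>linear L\<close> touch] by (simp add: inner_diff_right)
qed

lemma image_eq_touching_point_if_adjoint_zero:
  fixes L :: "'a::euclidean_space \<Rightarrow> 'b::euclidean_space"
  assumes "linear L" and in_ball: "\<And>w. norm w \<le> 1 \<Longrightarrow> norm (L w + c) \<le> 1"
    and touch: "norm (L w0 + c) = 1" and "adjoint L (L w0 + c) = 0" and "norm w \<le> 1"
  shows "L w + c = L w0 + c"
proof (rule eq_if_inner_ge_one)
  show "1 \<le> (L w0 + c) \<bullet> (L w + c)"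
    using inner_touching_point[OF \<open>linear L\<close> touch] assms(4) by simp
qed (simp_all add: touch in_ball \<open>norm w \<le> 1\<close>)

locale ball_image_touching_sphere =
  fixes L :: "'a::euclidean_space \<Rightarrow> 'b::euclidean_space" and c :: 'b and w0 :: 'a and t :: real
  assumes linear: "linear L"
    and in_ball: "\<And>w. norm w \<le> 1 \<Longrightarrow> norm (L w + c) \<le> 1"
    and norm_w0: "norm w0 = 1"
    and touch: "norm (L w0 + c) = 1"
    and adjoint_touch: "adjoint L (L w0 + c) = t *\<^sub>R w0"
    and pos: "0 < t"
begin

lemma norm_image_squared:
  "(norm (L w + c))\<^sup>2 = 1 - t * (1 - (norm w)\<^sup>2) - (t * (norm (w - w0))\<^sup>2 - (norm (L (w - w0)))\<^sup>2)"
proof -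
  define d where "d = w - w0"
  have "L w + c = (L w0 + c) + L d"
    unfolding d_def using linear by (simp add: linear_diff)
  then have "(norm (L w + c))\<^sup>2 = (norm (L w0 + c))\<^sup>2 + 2 * ((L w0 + c) \<bullet> L d) + (norm (L d))\<^sup>2"
    by (simp only: power2_norm_add)
  moreover have "(L w0 + c) \<bullet> L d = t * (w0 \<bullet> d)"
    using adjoint_works[OF linear, of d "L w0 + c"] adjoint_touch by (simp add: inner_commute)
  ultimately have "(norm (L w + c))\<^sup>2 = 1 + 2 * t * (w0 \<bullet> d) + (norm (L d))\<^sup>2"
    using touch by simp
  moreover have "(norm w)\<^sup>2 = 1 + 2 * (w0 \<bullet> d) + (norm d)\<^sup>2"
    using power2_norm_add[of w0 d] norm_w0 unfolding d_def by simp
  ultimately show ?thesis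
    unfolding d_def[symmetric] by (simp add: algebra_simps)
qed

lemma norm_image_diff_le_on_sphere:
  assumes "norm w = 1"
  shows "(norm (L (w - w0)))\<^sup>2 \<le> t * (norm (w - w0))\<^sup>2"
proof -
  have "(norm (L w + c))\<^sup>2 \<le> 1"
    using in_ball[of w] assms by (simp add: power_le_one)
  then show ?thesis using norm_image_squared[of w] assms by simp
qed

lemma norm_image_le: "(norm (L d))\<^sup>2 \<le> t * (norm d)\<^sup>2"
proof -
  define q where "q d = t * (norm d)\<^sup>2 - (norm (L d))\<^sup>2" for d
  have q_scale: "q (s *\<^sub>R d) = s\<^sup>2 * q d" for s d
    unfolding q_def using linear by (simp add: linear_scale power_mult_distrib algebra_simps)
  have "0 \<le> q d"
  proof (rule nonneg_if_nonneg_on_open_halfspace[where q = q and u = w0])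
    show "continuous_on UNIV q"
      unfolding q_def using linear
      by (intro continuous_intros linear_continuous_on) (simp add: linear_conv_bounded_linear)
    show "q (- d) = q d" for d
      unfolding q_def using linear by (simp add: linear_neg)
    show "w0 \<noteq> 0" using norm_w0 by auto
  next
    fix d assume "w0 \<bullet> d < 0"
    then have "d \<noteq> 0" by auto
    define s where "s = - 2 * (w0 \<bullet> d) / (norm d)\<^sup>2"
    have "s > 0" unfolding s_def using \<open>w0 \<bullet> d < 0\<close> \<open>d \<noteq> 0\<close> by (simp add: divide_neg_pos)
    have "(norm (w0 + s *\<^sub>R d))\<^sup>2 = 1 + s * (2 * (w0 \<bullet> d) + s * (norm d)\<^sup>2)"
      using norm_w0 power2_norm_add[of w0 "s *\<^sub>R d"] by (simp add: power_mult_distrib algebra_simps power2_eq_square)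
    also have "2 * (w0 \<bullet> d) + s * (norm d)\<^sup>2 = 0"
      unfolding s_def using \<open>d \<noteq> 0\<close> by simp
    finally have "norm (w0 + s *\<^sub>R d) = 1" by (simp add: norm_eq_1 power2_norm_eq_inner)
    then have "0 \<le> q (s *\<^sub>R d)"
      using norm_image_diff_le_on_sphere unfolding q_def by fastforce
    then show "0 \<le> q d" using \<open>s > 0\<close> q_scale by (simp add: zero_le_mult_iff)
  qed
  then show ?thesis unfolding q_def by simp
qed

lemma inner_image_eq_if_norm_image_eq:
  assumes "(norm (L d))\<^sup>2 = t * (norm d)\<^sup>2"
  shows "L d \<bullet> L e = t * (d \<bullet> e)"
proof -
  have "0 \<le> 2 * s * (t * (d \<bullet> e) - L d \<bullet> L e) + s\<^sup>2 * (t * (norm e)\<^sup>2 - (norm (L e))\<^sup>2)" for s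
  proof -
    have "L (d + s *\<^sub>R e) = L d + s *\<^sub>R L e"
      using linear by (simp add: linear_add linear_scale)
    then show ?thesis
      using norm_image_le[of "d + s *\<^sub>R e"] assms
      by (simp add: power2_norm_add power_mult_distrib algebra_simps)
  qed
  then show ?thesis using linear_coeff_eq_0_if_nonneg_quadratic by fastforce
qed

definition tight_directions :: "'a set" where
  "tight_directions = {d. (norm (L d))\<^sup>2 = t * (norm d)\<^sup>2}"

lemma subspace_tight_directions: "subspace tight_directions"
proof -
  have "tight_directions = {d. \<forall>e. L d \<bullet> L e = t * (d \<bullet> e)}"
    unfolding tight_directions_def
    using inner_image_eq_if_norm_image_eq by (auto simp: power2_norm_eq_inner)
  then show ?thesis
    using linear
    by (simp add: subspace_def linear_0 linear_add linear_scale inner_add_left algebra_simps)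
qed

lemma tight_if_norm_image_eq_one:
  assumes "norm w \<le> 1" and "norm (L w + c) = 1"
  shows "w - w0 \<in> tight_directions"
proof -
  have "0 \<le> t * (1 - (norm w)\<^sup>2)"
    using pos assms(1) by (simp add: power_le_one)
  moreover have "0 \<le> t * (norm (w - w0))\<^sup>2 - (norm (L (w - w0)))\<^sup>2"
    using norm_image_le by simp
  ultimately show ?thesis
    using norm_image_squared[of w] assms(2) unfolding tight_directions_def by simp
qed

lemma norm_image_eq_one_iff:
  assumes "w - w0 \<in> tight_directions"
  shows "norm (L w + c) = 1 \<longleftrightarrow> norm w = 1"
  using norm_image_squared[of w] assms pos
  by (simp add: tight_directions_def norm_eq_1 flip: power2_norm_eq_inner)

lemma sphere_inter_affine_hull_subset:
  defines "A \<equiv> (\<lambda>w. L w + c) ` cball 0 1 \<inter> sphere 0 1"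
  shows "sphere 0 1 \<inter> affine hull A \<subseteq> A"
proof -
  define Z where "Z = (+) (L w0 + c) ` L ` tight_directions"
  have "affine Z"
    unfolding Z_def using linear subspace_tight_directions
    by (simp flip: affine_translation add: linear_subspace_image subspace_imp_affine)
  have Z_iff: "y \<in> Z \<longleftrightarrow> (\<exists>w. y = L w + c \<and> w - w0 \<in> tight_directions)" for y
  proof -
    have shift: "L w0 + c + L d = L (w0 + d) + c" for d
      using linear by (simp add: linear_add)
    show ?thesis
    proof
      assume "y \<in> Z"
      then obtain d where "d \<in> tight_directions" and "y = L w0 + c + L d"
        unfolding Z_def by auto
      then show "\<exists>w. y = L w + c \<and> w - w0 \<in> tight_directions"
        using shift by (intro exI[of _ "w0 + d"]) simp
    next
      assume "\<exists>w. y = L w + c \<and> w - w0 \<in> tight_directions"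
      then obtain w where "y = L w + c" and "w - w0 \<in> tight_directions" by blast
      then show "y \<in> Z"
        unfolding Z_def using shift[of "w - w0"] by (intro image_eqI) auto
    qed
  qed
  have "A \<subseteq> Z"
  proof
    fix y assume "y \<in> A"
    then obtain w where "norm w \<le> 1" and "y = L w + c" and "norm y = 1"
      unfolding A_def by auto
    then show "y \<in> Z" using Z_iff tight_if_norm_image_eq_one by blast
  qed
  then have "affine hull A \<subseteq> Z"
    using \<open>affine Z\<close> by (rule hull_minimal)
  then show ?thesis
    unfolding A_def using Z_iff norm_image_eq_one_iff by fastforce
qed

end

lemma sphere_inter_affine_hull_image_subset:
  fixes L :: "'a::euclidean_space \<Rightarrow> 'b::euclidean_space" and c :: 'b
  defines "A \<equiv> (\<lambda>w. L w + c) ` cball 0 1 \<inter> sphere 0 1"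
  assumes "linear L" and in_ball: "\<And>w. norm w \<le> 1 \<Longrightarrow> norm (L w + c) \<le> 1"
    and "norm w0 \<le> 1" and touch: "norm (L w0 + c) = 1"
  shows "sphere 0 1 \<inter> affine hull A \<subseteq> A"
proof -
  define v where "v = adjoint L (L w0 + c)"
  have support: "\<And>w. norm w \<le> 1 \<Longrightarrow> v \<bullet> w \<le> v \<bullet> w0"
    unfolding v_def using adjoint_support_at_touching_point[OF \<open>linear L\<close> in_ball touch] .
  show ?thesis
  proof (cases "v = 0")
    case True
    have "L w + c = L w0 + c" if "norm w \<le> 1" for w
      using \<open>linear L\<close> in_ball touch True[unfolded v_def] that
      by (rule image_eq_touching_point_if_adjoint_zero)
    then have "(\<lambda>w. L w + c) ` cball 0 1 \<subseteq> {L w0 + c}"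
      by auto
    moreover have "L w0 + c \<in> (\<lambda>w. L w + c) ` cball 0 1"
      by (intro rev_image_eqI[of w0]) (simp_all add: \<open>norm w0 \<le> 1\<close>)
    ultimately have "(\<lambda>w. L w + c) ` cball 0 1 = {L w0 + c}"
      by blast
    then show ?thesis
      unfolding A_def using touch by simp
  next
    case False
    then have "w0 = v /\<^sub>R norm v"
      using cball_inner_maximizer_eq \<open>norm w0 \<le> 1\<close> support by blast
    then have "norm w0 = 1" and "v = norm v *\<^sub>R w0"
      using False by simp_all
    then interpret ball_image_touching_sphere L c w0 "norm v"
      using \<open>linear L\<close> in_ball touch False by (simp add: ball_image_touching_sphere_def flip: v_def)
    show ?thesis unfolding A_def by (rule sphere_inter_affine_hull_subset)
  qed
qed

theorem lemma5:
  fixes E :: "(real ^ 'n) set"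
  assumes "ellipsoid E" and "E \<subseteq> cball 0 1"
  shows "subsphere (E \<inter> sphere 0 1)"
proof -
  obtain L :: "real ^ 'n \<Rightarrow> real ^ 'n" and c where "linear L" and E: "E = (\<lambda>x. L x + c) ` cball 0 1"
    using assms(1) unfolding ellipsoid_def by blast
  have in_ball: "\<And>w. norm w \<le> 1 \<Longrightarrow> norm (L w + c) \<le> 1"
    using assms(2) unfolding E by force
  have "sphere 0 1 \<inter> affine hull (E \<inter> sphere 0 1) \<subseteq> E \<inter> sphere 0 1"
  proof (cases "E \<inter> sphere 0 1 = {}")
    case False
    then obtain w0 where "norm w0 \<le> 1" and "norm (L w0 + c) = 1"
      unfolding E by auto
    then show ?thesis
      unfolding E using sphere_inter_affine_hull_image_subset \<open>linear L\<close> in_ball by blast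
  qed simp
  then show ?thesis
    unfolding subsphere_def using hull_subset[of "E \<inter> sphere 0 1"] by blast
qed

end
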